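(* Fix integers $n,N,k\geq1$, let $V=\mathbb{C}[z_0,\ldots,z_n]_k^{\oplus(N+1)}$, and let $V^{(1)}\subset V$ be the set of tuples $\psi=(\psi_0,\ldots,\psi_N)$ whose components do not simultaneously vanish on any codimension-one subvariety of $\mathbb{P}^n$, each defining a rational map $\psi:\mathbb{P}^n\dashrightarrow\mathbb{P}^N$. Let $V^{(2)}\subset V^{(1)}$ be the subset of $\psi$ such that $\psi$ is an immersion at a generic point of $\mathbb{P}^n$. Then $V^{(2)}$ is Zariski open in $V^{(1)}$. *)

theory Defs
  imports Complex_Main "HOL-Library.Poly_Mapping"
begin

text \<open>Multivariate polynomials over the complex numbers with variables of type 'v,
  represented as finitely supported maps from monomials (exponent vectors) to coefficients.\<close>
type_synonym 'v cpoly = "('v \<Rightarrow>\<^sub>0 nat) \<Rightarrow>\<^sub>0 complex"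

definition cpoly_eval :: "'v cpoly \<Rightarrow> ('v \<Rightarrow> complex) \<Rightarrow> complex" where
  "cpoly_eval P x = (\<Sum>m\<in>Poly_Mapping.keys P. Poly_Mapping.lookup P m * (\<Prod>v\<in>Poly_Mapping.keys m. (x v) ^ (Poly_Mapping.lookup m v)))"

text \<open>Homogeneous polynomial of degree d in the variables z_0..z_n (the zero polynomial
  counts as homogeneous of every degree).\<close>
definition hom_poly :: "nat \<Rightarrow> nat \<Rightarrow> nat cpoly \<Rightarrow> bool" where
  "hom_poly n d P \<longleftrightarrow> (\<forall>\<alpha>\<in>Poly_Mapping.keys P. Poly_Mapping.keys \<alpha> \<subseteq> {0..n} \<and> (\<Sum>j\<in>Poly_Mapping.keys \<alpha>. Poly_Mapping.lookup \<alpha> j) = d)"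

text \<open>Points of C^(n+1), as functions vanishing beyond index n.\<close>
definition cpt :: "nat \<Rightarrow> (nat \<Rightarrow> complex) \<Rightarrow> bool" where
  "cpt n p \<longleftrightarrow> (\<forall>j>n. p j = 0)"

text \<open>The space V = C[z_0..z_n]_k^(N+1): tuples psi_0..psi_N (psi i = 0 for i > N).\<close>
definition Vsp :: "nat \<Rightarrow> nat \<Rightarrow> nat \<Rightarrow> (nat \<Rightarrow> nat cpoly) set" where
  "Vsp n N k = {\<psi>. (\<forall>i\<le>N. hom_poly n k (\<psi> i)) \<and> (\<forall>i>N. \<psi> i = 0)}"

text \<open>Linear coordinates on V: the coefficients.\<close>
definition Vcoords :: "(nat \<Rightarrow> nat cpoly) \<Rightarrow> (nat \<times> (nat \<Rightarrow>\<^sub>0 nat)) \<Rightarrow> complex" where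
  "Vcoords \<psi> = (\<lambda>(i, \<alpha>). Poly_Mapping.lookup (\<psi> i) \<alpha>)"

text \<open>V^(1): the components do not simultaneously vanish on any hypersurface of P^n,
  i.e. on the zero locus of a nonzero homogeneous polynomial of positive degree.\<close>
definition V1 :: "nat \<Rightarrow> nat \<Rightarrow> nat \<Rightarrow> (nat \<Rightarrow> nat cpoly) set" where
  "V1 n N k = {\<psi>\<in>Vsp n N k. \<not> (\<exists>d f. d \<ge> 1 \<and> hom_poly n d f \<and> f \<noteq> 0 \<and>
       (\<forall>p. cpt n p \<and> p \<noteq> (\<lambda>_. 0) \<and> cpoly_eval f p = 0 \<longrightarrow> (\<forall>i\<le>N. cpoly_eval (\<psi> i) p = 0)))}"

text \<open>Differential of the affine lift psi-hat at p in direction v (i-th component).\<close>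
definition dpsi :: "(nat \<Rightarrow> nat cpoly) \<Rightarrow> (nat \<Rightarrow> complex) \<Rightarrow> (nat \<Rightarrow> complex) \<Rightarrow> nat \<Rightarrow> complex" where
  "dpsi \<psi> p v i = (THE D. ((\<lambda>t. cpoly_eval (\<psi> i) (\<lambda>j. p j + t * v j)) has_field_derivative D) (at 0))"

text \<open>psi is an immersion at the point [p] of P^n: psi is defined at [p] and its differential
  T_[p] P^n = C^(n+1)/C p \<rightarrow> T_[psi(p)] P^N = C^(N+1)/C psi(p) is injective.\<close>
definition immersion_at :: "nat \<Rightarrow> nat \<Rightarrow> (nat \<Rightarrow> nat cpoly) \<Rightarrow> (nat \<Rightarrow> complex) \<Rightarrow> bool" where
  "immersion_at n N \<psi> p \<longleftrightarrow> cpt n p \<and> p \<noteq> (\<lambda>_. 0) \<and> (\<exists>i\<le>N. cpoly_eval (\<psi> i) p \<noteq> 0) \<and>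
     (\<forall>v. cpt n v \<longrightarrow> (\<exists>c. \<forall>i\<le>N. dpsi \<psi> p v i = c * cpoly_eval (\<psi> i) p)
          \<longrightarrow> (\<exists>d. v = (\<lambda>j. d * p j)))"

text \<open>Immersion at a generic point: on a nonempty (basic) Zariski open subset D_+(g) of P^n.\<close>
definition generic_immersion :: "nat \<Rightarrow> nat \<Rightarrow> (nat \<Rightarrow> nat cpoly) \<Rightarrow> bool" where
  "generic_immersion n N \<psi> \<longleftrightarrow> (\<exists>d g. hom_poly n d g \<and>
      (\<exists>p. cpt n p \<and> p \<noteq> (\<lambda>_. 0) \<and> cpoly_eval g p \<noteq> 0) \<and>
      (\<forall>p. cpt n p \<and> p \<noteq> (\<lambda>_. 0) \<and> cpoly_eval g p \<noteq> 0 \<longrightarrow> immersion_at n N \<psi> p))"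

definition V2 :: "nat \<Rightarrow> nat \<Rightarrow> nat \<Rightarrow> (nat \<Rightarrow> nat cpoly) set" where
  "V2 n N k = {\<psi>\<in>V1 n N k. generic_immersion n N \<psi>}"

text \<open>A subset B of A \<subseteq> V is Zariski open in A: B = A minus a Zariski closed subset of V
  (common zero locus of a set S of polynomial functions in the coefficients).\<close>
definition zariski_open_in_V :: "(nat \<Rightarrow> nat cpoly) set \<Rightarrow> (nat \<Rightarrow> nat cpoly) set \<Rightarrow> bool" where
  "zariski_open_in_V A B \<longleftrightarrow> B \<subseteq> A \<and> (\<exists>S :: (nat \<times> (nat \<Rightarrow>\<^sub>0 nat)) cpoly set.
      B = {\<psi>\<in>A. \<exists>G\<in>S. cpoly_eval G (Vcoords \<psi>) \<noteq> 0})"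

end

theory Submission
  imports Defs "Jordan_Normal_Form.Determinant"
begin

(*
  The differential of \<open>\<psi>\<close> at \<open>[p]\<close> is induced by the Jacobian \<open>J\<^sub>\<psi>(p)\<close> of the affine lift, and
  Euler's identity \<open>J\<^sub>\<psi>(p) p = k \<psi>(p)\<close> shows that \<open>\<psi>\<close> is an immersion at \<open>[p]\<close> iff \<open>J\<^sub>\<psi>(p)\<close> is
  injective. If it is, then \<open>det (R J\<^sub>\<psi>(p)) \<noteq> 0\<close> for the Gram choice \<open>R = J\<^sub>\<psi>(p)\<^sup>H\<close>, and for fixed \<open>R\<close>
  and \<open>p\<close> this determinant is a polynomial in the coefficients of \<open>\<psi>\<close>. Conversely, if
  \<open>det (R J\<^sub>\<psi>(p)) \<noteq> 0\<close> for some \<open>R\<close> and \<open>p\<close>, then \<open>z \<mapsto> det (R J\<^sub>\<psi>(z))\<close> is a homogeneous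
  polynomial that does not vanish at \<open>p\<close>, and \<open>J\<^sub>\<psi>(z)\<close> is injective wherever it does not vanish.
  So V2 is the complement in V1 of the common zeros of all these polynomials.
*)

declare One_nat_def [simp del] \<comment> \<open>made a simp rule by Jordan_Normal_Form; it would rewrite \<open>single u 1\<close>\<close>

section \<open>Evaluation of polynomials\<close>

definition mon_eval :: "('v \<Rightarrow>\<^sub>0 nat) \<Rightarrow> ('v \<Rightarrow> complex) \<Rightarrow> complex" where
  "mon_eval m x = (\<Prod>v\<in>Poly_Mapping.keys m. x v ^ Poly_Mapping.lookup m v)"

lemma cpoly_eval_eq_sum_mon: "cpoly_eval P x = (\<Sum>m\<in>Poly_Mapping.keys P. Poly_Mapping.lookup P m * mon_eval m x)"
  by (simp add: cpoly_eval_def mon_eval_def)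

lemma cpoly_eval_superset:
  assumes "finite K" "Poly_Mapping.keys P \<subseteq> K"
  shows "cpoly_eval P x = (\<Sum>m\<in>K. Poly_Mapping.lookup P m * mon_eval m x)"
  unfolding cpoly_eval_eq_sum_mon
  by (rule sum.mono_neutral_left) (use assms in \<open>auto simp: in_keys_iff\<close>)

lemma mon_eval_superset:
  assumes "finite K" "Poly_Mapping.keys m \<subseteq> K"
  shows "mon_eval m x = (\<Prod>v\<in>K. x v ^ Poly_Mapping.lookup m v)"
  unfolding mon_eval_def
  by (rule prod.mono_neutral_left) (use assms in \<open>auto simp: in_keys_iff\<close>)

lemma mon_eval_zero [simp]: "mon_eval 0 x = 1"
  by (simp add: mon_eval_def)

lemma mon_eval_single [simp]: "mon_eval (Poly_Mapping.single v 1) x = x v"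
  by (simp add: mon_eval_def)

lemma mon_eval_add: "mon_eval (m + m') x = mon_eval m x * mon_eval m' x"
proof -
  let ?K = "Poly_Mapping.keys m \<union> Poly_Mapping.keys m'"
  have "mon_eval (m + m') x = (\<Prod>v\<in>?K. x v ^ Poly_Mapping.lookup m v * x v ^ Poly_Mapping.lookup m' v)"
    by (subst mon_eval_superset[of ?K]) (auto simp: keys_add lookup_add power_add)
  then show ?thesis
    by (simp add: prod.distrib mon_eval_superset[of ?K])
qed

lemma cpoly_eval_zero [simp]: "cpoly_eval 0 x = 0"
  by (simp add: cpoly_eval_def)

lemma cpoly_eval_single [simp]: "cpoly_eval (Poly_Mapping.single m a) x = a * mon_eval m x"
  by (simp add: cpoly_eval_eq_sum_mon)

lemma cpoly_eval_add: "cpoly_eval (P + Q) x = cpoly_eval P x + cpoly_eval Q x"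
proof -
  let ?K = "Poly_Mapping.keys P \<union> Poly_Mapping.keys Q"
  show ?thesis
    using cpoly_eval_superset[of ?K "P + Q" x] cpoly_eval_superset[of ?K P x] cpoly_eval_superset[of ?K Q x]
    by (auto simp: keys_add lookup_add distrib_right sum.distrib)
qed

lemma cpoly_eval_sum: "cpoly_eval (\<Sum>i\<in>I. P i) x = (\<Sum>i\<in>I. cpoly_eval (P i) x)"
  by (induction I rule: infinite_finite_induct) (auto simp: cpoly_eval_add)

lemma poly_mapping_sum_single:
  "P = (\<Sum>m\<in>Poly_Mapping.keys P. Poly_Mapping.single m (Poly_Mapping.lookup P m))"
proof (rule poly_mapping_eqI)
  fix m
  show "Poly_Mapping.lookup P m = Poly_Mapping.lookup (\<Sum>m\<in>Poly_Mapping.keys P. Poly_Mapping.single m (Poly_Mapping.lookup P m)) m"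
    by (cases "m \<in> Poly_Mapping.keys P") (auto simp: lookup_sum lookup_single when_def in_keys_iff)
qed

lemma cpoly_eval_mult: "cpoly_eval (P * Q) x = cpoly_eval P x * cpoly_eval Q x"
proof -
  let ?a = "Poly_Mapping.lookup P" and ?b = "Poly_Mapping.lookup Q"
  have "P * Q = (\<Sum>m\<in>Poly_Mapping.keys P. \<Sum>m'\<in>Poly_Mapping.keys Q.
      Poly_Mapping.single m (?a m) * Poly_Mapping.single m' (?b m'))"
    by (subst (1 2) poly_mapping_sum_single) (rule sum_product)
  then have "cpoly_eval (P * Q) x = (\<Sum>m\<in>Poly_Mapping.keys P. \<Sum>m'\<in>Poly_Mapping.keys Q.
      (?a m * mon_eval m x) * (?b m' * mon_eval m' x))"
    by (simp add: mult_single cpoly_eval_sum mon_eval_add mult_ac)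
  then show ?thesis
    by (simp add: cpoly_eval_eq_sum_mon sum_product)
qed

section \<open>Homogeneous polynomials\<close>

definition mon_degree :: "('v \<Rightarrow>\<^sub>0 nat) \<Rightarrow> nat" where
  "mon_degree a = (\<Sum>j\<in>Poly_Mapping.keys a. Poly_Mapping.lookup a j)"

lemma mon_degree_superset:
  assumes "finite K" "Poly_Mapping.keys a \<subseteq> K"
  shows "mon_degree a = (\<Sum>j\<in>K. Poly_Mapping.lookup a j)"
  unfolding mon_degree_def
  by (rule sum.mono_neutral_left) (use assms in \<open>auto simp: in_keys_iff\<close>)

lemma mon_degree_add: "mon_degree (a + b) = mon_degree a + mon_degree b"
proof -
  let ?K = "Poly_Mapping.keys a \<union> Poly_Mapping.keys b"
  show ?thesis
    using mon_degree_superset[of ?K "a + b"] mon_degree_superset[of ?K a] mon_degree_superset[of ?K b]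
    by (auto simp: keys_add lookup_add sum.distrib)
qed

lemma mon_degree_single [simp]: "mon_degree (Poly_Mapping.single v 1) = 1"
  by (simp add: mon_degree_def)

lemma hom_poly_iff:
  "hom_poly n d P \<longleftrightarrow> (\<forall>a\<in>Poly_Mapping.keys P. Poly_Mapping.keys a \<subseteq> {0..n} \<and> mon_degree a = d)"
  by (simp add: hom_poly_def mon_degree_def)

lemma hom_poly_zero [simp]: "hom_poly n d 0"
  by (simp add: hom_poly_def)

lemma hom_poly_single:
  "Poly_Mapping.keys a \<subseteq> {0..n} \<Longrightarrow> mon_degree a = d \<Longrightarrow> hom_poly n d (Poly_Mapping.single a c)"
  by (simp add: hom_poly_iff)

lemma hom_poly_add: "hom_poly n d P \<Longrightarrow> hom_poly n d Q \<Longrightarrow> hom_poly n d (P + Q)"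
  using keys_add[of P Q] by (auto simp: hom_poly_iff)

lemma hom_poly_mult:
  assumes "hom_poly n d P" "hom_poly n e Q"
  shows "hom_poly n (d + e) (P * Q)"
  unfolding hom_poly_iff
proof
  fix c assume "c \<in> Poly_Mapping.keys (P * Q)"
  then obtain a b where c: "c = a + b" and "a \<in> Poly_Mapping.keys P" "b \<in> Poly_Mapping.keys Q"
    using keys_mult by blast
  then have "Poly_Mapping.keys a \<subseteq> {0..n}" "mon_degree a = d" "Poly_Mapping.keys b \<subseteq> {0..n}" "mon_degree b = e"
    using assms by (auto simp: hom_poly_iff)
  then show "Poly_Mapping.keys c \<subseteq> {0..n} \<and> mon_degree c = d + e"
    using keys_add[of a b] by (auto simp: c mon_degree_add)
qed

lemma finite_monomials: "finite {a :: nat \<Rightarrow>\<^sub>0 nat. Poly_Mapping.keys a \<subseteq> {0..n} \<and> mon_degree a = d}"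
  (is "finite ?M")
proof -
  let ?F = "{f. \<forall>j. (j \<in> {0..n} \<longrightarrow> f j \<in> {0..d}) \<and> (j \<notin> {0..n} \<longrightarrow> f j = (0::nat))}"
  have "Poly_Mapping.lookup a j \<le> d" if "a \<in> ?M" for a j
    using that member_le_sum[of j "Poly_Mapping.keys a" "Poly_Mapping.lookup a"]
    by (cases "j \<in> Poly_Mapping.keys a") (auto simp: mon_degree_def in_keys_iff)
  moreover have "Poly_Mapping.lookup a j = 0" if "a \<in> ?M" "j \<notin> {0..n}" for a j
    using that by (auto simp: in_keys_iff)
  ultimately have "Poly_Mapping.lookup ` ?M \<subseteq> ?F"
    by auto
  moreover have "finite ?F"
    by (rule finite_set_of_finite_funs) auto
  moreover have "inj_on Poly_Mapping.lookup ?M"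
    by (rule inj_onI) (rule poly_mapping_eqI, simp)
  ultimately show ?thesis
    using finite_imageD finite_subset by blast
qed

section \<open>Polynomial functions\<close>

definition poly_fun :: "(('v \<Rightarrow> complex) \<Rightarrow> complex) \<Rightarrow> bool" where
  "poly_fun f \<longleftrightarrow> (\<exists>P. f = cpoly_eval P)"

definition hom_poly_fun :: "nat \<Rightarrow> nat \<Rightarrow> ((nat \<Rightarrow> complex) \<Rightarrow> complex) \<Rightarrow> bool" where
  "hom_poly_fun n d f \<longleftrightarrow> (\<exists>P. hom_poly n d P \<and> f = cpoly_eval P)"

lemma poly_fun_const: "poly_fun (\<lambda>x. c)"
  unfolding poly_fun_def by (rule exI[of _ "Poly_Mapping.single 0 c"]) auto

lemma poly_fun_var: "poly_fun (\<lambda>x. x v)"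
  unfolding poly_fun_def by (rule exI[of _ "Poly_Mapping.single (Poly_Mapping.single v 1) 1"]) (simp add: fun_eq_iff mon_eval_def)

lemma poly_fun_add:
  assumes "poly_fun f" "poly_fun g"
  shows "poly_fun (\<lambda>x. f x + g x)"
proof -
  from assms obtain P Q where "f = cpoly_eval P" "g = cpoly_eval Q"
    by (auto simp: poly_fun_def)
  then show ?thesis
    unfolding poly_fun_def by (intro exI[of _ "P + Q"]) (simp add: fun_eq_iff cpoly_eval_add)
qed

lemma poly_fun_mult:
  assumes "poly_fun f" "poly_fun g"
  shows "poly_fun (\<lambda>x. f x * g x)"
proof -
  from assms obtain P Q where "f = cpoly_eval P" "g = cpoly_eval Q"
    by (auto simp: poly_fun_def)
  then show ?thesis
    unfolding poly_fun_def by (intro exI[of _ "P * Q"]) (simp add: fun_eq_iff cpoly_eval_mult)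
qed

lemma poly_fun_sum: "(\<And>i. i \<in> I \<Longrightarrow> poly_fun (f i)) \<Longrightarrow> poly_fun (\<lambda>x. \<Sum>i\<in>I. f i x)"
  by (induction I rule: infinite_finite_induct) (auto intro: poly_fun_add poly_fun_const)

lemma poly_fun_prod: "(\<And>i. i \<in> I \<Longrightarrow> poly_fun (f i)) \<Longrightarrow> poly_fun (\<lambda>x. \<Prod>i\<in>I. f i x)"
  by (induction I rule: infinite_finite_induct) (auto intro: poly_fun_mult poly_fun_const)

lemma hom_poly_fun_const: "hom_poly_fun n 0 (\<lambda>x. c)"
  unfolding hom_poly_fun_def
  by (rule exI[of _ "Poly_Mapping.single 0 c"]) (auto intro: hom_poly_single simp: mon_degree_def)

lemma hom_poly_fun_mon:
  "Poly_Mapping.keys a \<subseteq> {0..n} \<Longrightarrow> mon_degree a = d \<Longrightarrow> hom_poly_fun n d (mon_eval a)"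
  unfolding hom_poly_fun_def
  by (rule exI[of _ "Poly_Mapping.single a 1"]) (auto intro: hom_poly_single)

lemma hom_poly_fun_add:
  assumes "hom_poly_fun n d f" "hom_poly_fun n d g"
  shows "hom_poly_fun n d (\<lambda>x. f x + g x)"
proof -
  from assms obtain P Q where "hom_poly n d P" "f = cpoly_eval P" "hom_poly n d Q" "g = cpoly_eval Q"
    by (auto simp: hom_poly_fun_def)
  then show ?thesis
    unfolding hom_poly_fun_def by (intro exI[of _ "P + Q"]) (simp add: fun_eq_iff cpoly_eval_add hom_poly_add)
qed

lemma hom_poly_fun_mult:
  assumes "hom_poly_fun n d f" "hom_poly_fun n e g"
  shows "hom_poly_fun n (d + e) (\<lambda>x. f x * g x)"
proof -
  from assms obtain P Q where "hom_poly n d P" "f = cpoly_eval P" "hom_poly n e Q" "g = cpoly_eval Q"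
    by (auto simp: hom_poly_fun_def)
  then show ?thesis
    unfolding hom_poly_fun_def by (intro exI[of _ "P * Q"]) (simp add: fun_eq_iff cpoly_eval_mult hom_poly_mult)
qed

lemma hom_poly_fun_scale: "hom_poly_fun n d f \<Longrightarrow> hom_poly_fun n d (\<lambda>x. c * f x)"
  using hom_poly_fun_mult[OF hom_poly_fun_const, of n d f c] by simp

lemma hom_poly_fun_zero: "hom_poly_fun n d (\<lambda>x. 0)"
  unfolding hom_poly_fun_def by (intro exI[of _ 0]) auto

lemma hom_poly_fun_sum: "(\<And>i. i \<in> I \<Longrightarrow> hom_poly_fun n d (f i)) \<Longrightarrow> hom_poly_fun n d (\<lambda>x. \<Sum>i\<in>I. f i x)"
  by (induction I rule: infinite_finite_induct) (auto intro: hom_poly_fun_add hom_poly_fun_zero)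

lemma hom_poly_fun_prod:
  "(\<And>i. i \<in> I \<Longrightarrow> hom_poly_fun n d (f i)) \<Longrightarrow> hom_poly_fun n (card I * d) (\<lambda>x. \<Prod>i\<in>I. f i x)"
proof (induction I rule: infinite_finite_induct)
  case (insert i I)
  then have "hom_poly_fun n (d + card I * d) (\<lambda>x. f i x * (\<Prod>i\<in>I. f i x))"
    by (intro hom_poly_fun_mult) auto
  with insert.hyps show ?case
    by simp
qed (auto intro: hom_poly_fun_const)

section \<open>Partial derivatives\<close>

definition mon_partial :: "'v \<Rightarrow> ('v \<Rightarrow>\<^sub>0 nat) \<Rightarrow> ('v \<Rightarrow> complex) \<Rightarrow> complex" where
  "mon_partial u a z = of_nat (Poly_Mapping.lookup a u) * mon_eval (a - Poly_Mapping.single u 1) z"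

definition cpoly_partial :: "'v cpoly \<Rightarrow> 'v \<Rightarrow> ('v \<Rightarrow> complex) \<Rightarrow> complex" where
  "cpoly_partial P u z = (\<Sum>m\<in>Poly_Mapping.keys P. Poly_Mapping.lookup P m * mon_partial u m z)"

lemma mon_partial_eq_0: "u \<notin> Poly_Mapping.keys a \<Longrightarrow> mon_partial u a z = 0"
  by (simp add: mon_partial_def in_keys_iff)

lemma minus_single_add_single:
  fixes a :: "'v \<Rightarrow>\<^sub>0 nat"
  shows "u \<in> Poly_Mapping.keys a \<Longrightarrow> a - Poly_Mapping.single u 1 + Poly_Mapping.single u 1 = a"
  by (rule poly_mapping_eqI) (auto simp: lookup_add lookup_minus lookup_single when_def in_keys_iff)

lemma mon_eval_minus_single:
  assumes "u \<in> Poly_Mapping.keys a"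
  shows "mon_eval (a - Poly_Mapping.single u 1) z =
    z u ^ (Poly_Mapping.lookup a u - 1) * (\<Prod>w\<in>Poly_Mapping.keys a - {u}. z w ^ Poly_Mapping.lookup a w)"
proof -
  have "Poly_Mapping.keys (a - Poly_Mapping.single u 1) \<subseteq> Poly_Mapping.keys a"
    by (auto simp: in_keys_iff lookup_minus lookup_single when_def)
  then have "mon_eval (a - Poly_Mapping.single u 1) z =
      (\<Prod>w\<in>Poly_Mapping.keys a. z w ^ Poly_Mapping.lookup (a - Poly_Mapping.single u 1) w)"
    by (simp add: mon_eval_superset)
  also have "\<dots> = z u ^ (Poly_Mapping.lookup a u - 1) *
      (\<Prod>w\<in>Poly_Mapping.keys a - {u}. z w ^ Poly_Mapping.lookup (a - Poly_Mapping.single u 1) w)"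
    using assms by (simp add: prod.remove lookup_minus)
  also have "(\<Prod>w\<in>Poly_Mapping.keys a - {u}. z w ^ Poly_Mapping.lookup (a - Poly_Mapping.single u 1) w) =
      (\<Prod>w\<in>Poly_Mapping.keys a - {u}. z w ^ Poly_Mapping.lookup a w)"
    by (intro prod.cong) (auto simp: lookup_minus lookup_single)
  finally show ?thesis .
qed

lemma has_field_derivative_mon_eval:
  "((\<lambda>t. mon_eval a (\<lambda>j. p j + t * v j)) has_field_derivative
     (\<Sum>u\<in>Poly_Mapping.keys a. v u * mon_partial u a p)) (at 0)"
proof -
  let ?l = "Poly_Mapping.lookup a"
  have "((\<lambda>t. (p u + t * v u) ^ ?l u) has_field_derivative of_nat (?l u) * (v u * p u ^ (?l u - 1))) (at 0)" for u
    by (auto intro!: derivative_eq_intros simp: One_nat_def)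
  then have "((\<lambda>t. \<Prod>u\<in>Poly_Mapping.keys a. (p u + t * v u) ^ ?l u) has_field_derivative
      (\<Sum>u\<in>Poly_Mapping.keys a. of_nat (?l u) * (v u * p u ^ (?l u - 1)) *
         (\<Prod>w\<in>Poly_Mapping.keys a - {u}. (p w + 0 * v w) ^ ?l w))) (at 0)"
    by (rule has_field_derivative_prod)
  moreover have "(\<Sum>u\<in>Poly_Mapping.keys a. of_nat (?l u) * (v u * p u ^ (?l u - 1)) *
         (\<Prod>w\<in>Poly_Mapping.keys a - {u}. (p w + 0 * v w) ^ ?l w)) = (\<Sum>u\<in>Poly_Mapping.keys a. v u * mon_partial u a p)"
    by (intro sum.cong) (simp_all add: mon_partial_def mon_eval_minus_single mult_ac)
  ultimately show ?thesis
    by (simp add: mon_eval_def)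
qed

lemma euler_mon_eval:
  "(\<Sum>u\<in>Poly_Mapping.keys a. z u * mon_partial u a z) = of_nat (mon_degree a) * mon_eval a z"
proof -
  have "z u * mon_partial u a z = of_nat (Poly_Mapping.lookup a u) * mon_eval a z"
    if "u \<in> Poly_Mapping.keys a" for u
    using mon_eval_add[of "a - Poly_Mapping.single u 1" "Poly_Mapping.single u 1" z]
    unfolding minus_single_add_single[OF that] mon_eval_single by (simp add: mon_partial_def)
  then show ?thesis
    by (simp add: mon_degree_def sum_distrib_right)
qed

lemma hom_poly_fun_mon_partial:
  assumes "Poly_Mapping.keys a \<subseteq> {0..n}" "mon_degree a = d"
  shows "hom_poly_fun n (d - 1) (mon_partial u a)"
proof (cases "u \<in> Poly_Mapping.keys a")
  case False
  then have "mon_partial u a = (\<lambda>z. 0)"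
    by (simp add: fun_eq_iff mon_partial_eq_0)
  then show ?thesis
    using hom_poly_fun_zero by simp
next
  case True
  let ?b = "a - Poly_Mapping.single u 1"
  have "mon_degree ?b + 1 = d"
    using mon_degree_add[of ?b "Poly_Mapping.single u 1"] assms(2) by (simp add: minus_single_add_single[OF True])
  moreover have "Poly_Mapping.keys ?b \<subseteq> {0..n}"
    using assms(1) by (auto simp: in_keys_iff lookup_minus)
  ultimately have "hom_poly_fun n (d - 1) (mon_eval ?b)"
    by (intro hom_poly_fun_mon) auto
  then show ?thesis
    unfolding mon_partial_def by (rule hom_poly_fun_scale)
qed

lemma sum_mon_partial_superset:
  assumes "finite U" "Poly_Mapping.keys a \<subseteq> U"
  shows "(\<Sum>u\<in>Poly_Mapping.keys a. v u * mon_partial u a z) = (\<Sum>u\<in>U. v u * mon_partial u a z)"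
  by (rule sum.mono_neutral_left) (use assms in \<open>auto simp: mon_partial_eq_0\<close>)

lemma has_field_derivative_cpoly_eval:
  assumes "hom_poly n d P"
  shows "((\<lambda>t. cpoly_eval P (\<lambda>j. p j + t * v j)) has_field_derivative
    (\<Sum>u\<in>{0..n}. v u * cpoly_partial P u p)) (at 0)"
proof -
  have "((\<lambda>t. cpoly_eval P (\<lambda>j. p j + t * v j)) has_field_derivative
      (\<Sum>m\<in>Poly_Mapping.keys P. Poly_Mapping.lookup P m * (\<Sum>u\<in>Poly_Mapping.keys m. v u * mon_partial u m p))) (at 0)"
    unfolding cpoly_eval_eq_sum_mon by (intro DERIV_sum DERIV_cmult has_field_derivative_mon_eval)
  also have "(\<Sum>m\<in>Poly_Mapping.keys P. Poly_Mapping.lookup P m * (\<Sum>u\<in>Poly_Mapping.keys m. v u * mon_partial u m p)) =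
      (\<Sum>m\<in>Poly_Mapping.keys P. Poly_Mapping.lookup P m * (\<Sum>u\<in>{0..n}. v u * mon_partial u m p))"
    using assms by (intro sum.cong refl arg_cong2[where f = "(*)"] sum_mon_partial_superset) (auto simp: hom_poly_def)
  also have "\<dots> = (\<Sum>u\<in>{0..n}. v u * cpoly_partial P u p)"
    by (simp add: cpoly_partial_def sum_distrib_left mult_ac sum.swap[of _ "{0..n}"])
  finally show ?thesis .
qed

lemma euler_cpoly_eval:
  assumes "hom_poly n d P"
  shows "(\<Sum>u\<in>{0..n}. z u * cpoly_partial P u z) = of_nat d * cpoly_eval P z"
proof -
  have "(\<Sum>u\<in>{0..n}. z u * cpoly_partial P u z) =
      (\<Sum>m\<in>Poly_Mapping.keys P. Poly_Mapping.lookup P m * (\<Sum>u\<in>{0..n}. z u * mon_partial u m z))"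
    by (simp add: cpoly_partial_def sum_distrib_left mult_ac sum.swap[of _ "{0..n}"])
  also have "\<dots> = (\<Sum>m\<in>Poly_Mapping.keys P. Poly_Mapping.lookup P m * (of_nat d * mon_eval m z))"
  proof (intro sum.cong refl arg_cong2[where f = "(*)"])
    fix m assume "m \<in> Poly_Mapping.keys P"
    then have "Poly_Mapping.keys m \<subseteq> {0..n}" "mon_degree m = d"
      using assms by (auto simp: hom_poly_iff)
    then show "(\<Sum>u\<in>{0..n}. z u * mon_partial u m z) = of_nat d * mon_eval m z"
      using sum_mon_partial_superset[of "{0..n}" m z z] euler_mon_eval[of z m] by simp
  qed
  also have "\<dots> = of_nat d * cpoly_eval P z"
    by (simp add: cpoly_eval_eq_sum_mon sum_distrib_left mult_ac)
  finally show ?thesis .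
qed

lemma hom_poly_fun_cpoly_partial:
  assumes "hom_poly n d P"
  shows "hom_poly_fun n (d - 1) (cpoly_partial P u)"
proof -
  have "hom_poly_fun n (d - 1) (\<lambda>z. \<Sum>m\<in>Poly_Mapping.keys P. Poly_Mapping.lookup P m * mon_partial u m z)"
    using assms by (intro hom_poly_fun_sum hom_poly_fun_scale hom_poly_fun_mon_partial) (auto simp: hom_poly_iff)
  then show ?thesis
    by (simp add: cpoly_partial_def[abs_def])
qed

lemma cpoly_partial_eq_sum_monomials:
  assumes "hom_poly n d P"
  shows "cpoly_partial P u z =
    (\<Sum>a\<in>{a. Poly_Mapping.keys a \<subseteq> {0..n} \<and> mon_degree a = d}. Poly_Mapping.lookup P a * mon_partial u a z)"
  unfolding cpoly_partial_def
  by (rule sum.mono_neutral_left) (use assms finite_monomials in \<open>auto simp: hom_poly_iff in_keys_iff\<close>)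

section \<open>Determinants\<close>

lemma index_mult_mat_eq_sum:
  assumes "A \<in> carrier_mat m r" "B \<in> carrier_mat r l" "a < m" "b < l"
  shows "(A * B) $$ (a, b) = (\<Sum>i\<in>{0..<r}. A $$ (a, i) * B $$ (i, b))"
  using assms by (simp add: scalar_prod_def)

lemma poly_fun_det:
  assumes "\<And>c. A c \<in> carrier_mat m m" "\<And>a b. a < m \<Longrightarrow> b < m \<Longrightarrow> poly_fun (\<lambda>c. A c $$ (a, b))"
  shows "poly_fun (\<lambda>c. det (A c))"
proof -
  have "poly_fun (\<lambda>c. \<Sum>\<sigma>\<in>{\<sigma>. \<sigma> permutes {0..<m}}. signof \<sigma> * (\<Prod>a = 0..<m. A c $$ (a, \<sigma> a)))"
    by (intro poly_fun_sum poly_fun_mult poly_fun_const poly_fun_prod assms(2)) (auto simp: permutes_in_image)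
  moreover have "det (A z) = (\<Sum>\<sigma>\<in>{\<sigma>. \<sigma> permutes {0..<m}}. signof \<sigma> * (\<Prod>a = 0..<m. A z $$ (a, \<sigma> a)))" for z
    using assms(1) by (rule det_def')
  ultimately show ?thesis
    by simp
qed

lemma hom_poly_fun_det:
  assumes "\<And>z. A z \<in> carrier_mat m m" "\<And>a b. a < m \<Longrightarrow> b < m \<Longrightarrow> hom_poly_fun n d (\<lambda>z. A z $$ (a, b))"
  shows "hom_poly_fun n (m * d) (\<lambda>z. det (A z))"
proof -
  have "hom_poly_fun n (card {0..<m} * d) (\<lambda>z. \<Prod>a = 0..<m. A z $$ (a, \<sigma> a))" if "\<sigma> permutes {0..<m}" for \<sigma>
    using that by (intro hom_poly_fun_prod assms(2)) (auto simp: permutes_in_image)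
  then have "hom_poly_fun n (m * d) (\<lambda>z. \<Sum>\<sigma>\<in>{\<sigma>. \<sigma> permutes {0..<m}}. signof \<sigma> * (\<Prod>a = 0..<m. A z $$ (a, \<sigma> a)))"
    by (intro hom_poly_fun_sum hom_poly_fun_scale) auto
  moreover have "det (A z) = (\<Sum>\<sigma>\<in>{\<sigma>. \<sigma> permutes {0..<m}}. signof \<sigma> * (\<Prod>a = 0..<m. A z $$ (a, \<sigma> a)))" for z
    using assms(1) by (rule det_def')
  ultimately show ?thesis
    by simp
qed

lemma det_mult_ne_0_imp_kernel_trivial:
  fixes A B :: "'a :: field mat"
  assumes "A \<in> carrier_mat m r" "B \<in> carrier_mat r m" "det (A * B) \<noteq> 0"
    and "w \<in> carrier_vec m" "B *\<^sub>v w = 0\<^sub>v r"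
  shows "w = 0\<^sub>v m"
proof -
  have "(A * B) *\<^sub>v w = 0\<^sub>v m"
    using assms by (auto intro!: eq_vecI)
  then show ?thesis
    using assms det_0_iff_vec_prod_zero_field[of "A * B" m] by auto
qed

lemma semiring_hom_cnj: "semiring_hom cnj"
  by unfold_locales auto

lemma det_gram_ne_0:
  fixes B :: "complex mat"
  assumes B: "B \<in> carrier_mat r m"
    and inj: "\<And>w. w \<in> carrier_vec m \<Longrightarrow> B *\<^sub>v w = 0\<^sub>v r \<Longrightarrow> w = 0\<^sub>v m"
  shows "det (transpose_mat (map_mat cnj B) * B) \<noteq> 0"
proof
  let ?C = "map_mat cnj B"
  assume "det (transpose_mat ?C * B) = 0"
  then obtain w where w: "w \<in> carrier_vec m" "w \<noteq> 0\<^sub>v m" "(transpose_mat ?C * B) *\<^sub>v w = 0\<^sub>v m"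
    using det_0_iff_vec_prod_zero_field[of "transpose_mat ?C * B" m] B by auto
  let ?u = "B *\<^sub>v w"
  have u: "?u \<in> carrier_vec r"
    using B w(1) by auto
  have "?u \<bullet>c ?u = ?u \<bullet> (?C *\<^sub>v map_vec cnj w)"
    using semiring_hom.mult_mat_vec_hom[OF semiring_hom_cnj B w(1)]
    by (simp add: conjugate_vec_def map_vec_def)
  also have "\<dots> = (transpose_mat ?C *\<^sub>v ?u) \<bullet> map_vec cnj w"
    using B w(1) by (intro transpose_vec_mult_scalar[symmetric]) auto
  also have "transpose_mat ?C *\<^sub>v ?u = 0\<^sub>v m"
    using w(3) B w(1) by (simp add: assoc_mult_mat_vec)
  finally have "?u = 0\<^sub>v r"
    using u w(1) by simp
  with inj w show False
    by blast
qed

section \<open>The differential of the affine lift\<close>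

lemma dpsi_eq_sum_cpoly_partial:
  assumes "hom_poly n d (\<psi> i)"
  shows "dpsi \<psi> p v i = (\<Sum>u\<in>{0..n}. v u * cpoly_partial (\<psi> i) u p)"
proof -
  note D = has_field_derivative_cpoly_eval[OF assms, of p v]
  show ?thesis
    unfolding dpsi_def by (intro the_equality D) (rule DERIV_unique[OF _ D])
qed

lemma Vsp_hom_poly: "\<psi> \<in> Vsp n N k \<Longrightarrow> i \<le> N \<Longrightarrow> hom_poly n k (\<psi> i)"
  by (simp add: Vsp_def)

lemma dpsi_self:
  assumes "\<psi> \<in> Vsp n N k" "i \<le> N"
  shows "dpsi \<psi> p p i = of_nat k * cpoly_eval (\<psi> i) p"
  using Vsp_hom_poly[OF assms] by (simp add: dpsi_eq_sum_cpoly_partial euler_cpoly_eval)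

lemma dpsi_scaled:
  assumes "\<psi> \<in> Vsp n N k" "i \<le> N"
  shows "dpsi \<psi> p (\<lambda>j. c * v j) i = c * dpsi \<psi> p v i"
  using Vsp_hom_poly[OF assms] by (simp add: dpsi_eq_sum_cpoly_partial sum_distrib_left mult_ac)

lemma dpsi_diff_scaled:
  assumes "\<psi> \<in> Vsp n N k" "i \<le> N"
  shows "dpsi \<psi> p (\<lambda>j. v j - c * q j) i = dpsi \<psi> p v i - c * dpsi \<psi> p q i"
  using Vsp_hom_poly[OF assms] by (simp add: dpsi_eq_sum_cpoly_partial algebra_simps sum_subtractf sum_distrib_left)

lemma immersion_at_iff_dpsi_injective:
  assumes k: "k \<ge> 1" and \<psi>: "\<psi> \<in> Vsp n N k" and p: "cpt n p" "p \<noteq> (\<lambda>_. 0)"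
  shows "immersion_at n N \<psi> p \<longleftrightarrow> (\<forall>v. cpt n v \<longrightarrow> (\<forall>i\<le>N. dpsi \<psi> p v i = 0) \<longrightarrow> v = (\<lambda>_. 0))"
    (is "_ \<longleftrightarrow> ?inj")
proof
  assume imm: "immersion_at n N \<psi> p"
  then obtain i0 where i0: "i0 \<le> N" "cpoly_eval (\<psi> i0) p \<noteq> 0"
    by (auto simp: immersion_at_def)
  show ?inj
  proof (intro allI impI)
    fix v assume v: "cpt n v" "\<forall>i\<le>N. dpsi \<psi> p v i = 0"
    then obtain c where c: "v = (\<lambda>j. c * p j)"
      using imm unfolding immersion_at_def by (metis mult_zero_left)
    have "0 = dpsi \<psi> p (\<lambda>j. c * p j) i0"
      using v(2) i0(1) by (simp add: c)
    also have "\<dots> = c * of_nat k * cpoly_eval (\<psi> i0) p"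
      using \<psi> i0(1) by (simp add: dpsi_scaled dpsi_self)
    finally have "c = 0"
      using k i0(2) by simp
    then show "v = (\<lambda>_. 0)"
      by (simp add: c)
  qed
next
  assume inj: ?inj
  have "\<exists>i\<le>N. cpoly_eval (\<psi> i) p \<noteq> 0"
    using inj p \<psi> by (auto simp: dpsi_self)
  moreover have "\<exists>d. v = (\<lambda>j. d * p j)"
    if v: "cpt n v" and c: "\<forall>i\<le>N. dpsi \<psi> p v i = c * cpoly_eval (\<psi> i) p" for v c
  proof -
    \<comment> \<open>By Euler's identity the direction \<open>v\<close> differs from a multiple of \<open>p\<close> by a kernel vector.\<close>
    have "dpsi \<psi> p (\<lambda>j. v j - c / of_nat k * p j) i = 0" if "i \<le> N" for i
      using k that c unfolding dpsi_diff_scaled[OF \<psi> that] dpsi_self[OF \<psi> that] by simp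
    moreover have "cpt n (\<lambda>j. v j - c / of_nat k * p j)"
      using v p(1) by (simp add: cpt_def)
    ultimately have "(\<lambda>j. v j - c / of_nat k * p j) = (\<lambda>_. 0)"
      using inj by blast
    then show ?thesis
      by (intro exI[of _ "c / of_nat k"]) (simp add: fun_eq_iff)
  qed
  ultimately show "immersion_at n N \<psi> p"
    using p by (auto simp: immersion_at_def)
qed

section \<open>The Jacobian matrix\<close>

definition jacobian :: "nat \<Rightarrow> nat \<Rightarrow> (nat \<Rightarrow> nat cpoly) \<Rightarrow> (nat \<Rightarrow> complex) \<Rightarrow> complex mat" where
  "jacobian n N \<psi> z = mat (Suc N) (Suc n) (\<lambda>(i, u). cpoly_partial (\<psi> i) u z)"

lemma jacobian_carrier [simp]: "jacobian n N \<psi> z \<in> carrier_mat (Suc N) (Suc n)"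
  by (simp add: jacobian_def)

lemma jacobian_mult_vec_eq_0_iff:
  assumes "\<psi> \<in> Vsp n N k"
  shows "jacobian n N \<psi> p *\<^sub>v vec (Suc n) v = 0\<^sub>v (Suc N) \<longleftrightarrow> (\<forall>i\<le>N. dpsi \<psi> p v i = 0)"
proof -
  have "(jacobian n N \<psi> p *\<^sub>v vec (Suc n) v) $ i = dpsi \<psi> p v i" if "i \<le> N" for i
    using Vsp_hom_poly[OF assms that] that
    by (simp add: jacobian_def scalar_prod_def dpsi_eq_sum_cpoly_partial atLeastLessThanSuc_atLeastAtMost mult_ac)
  then show ?thesis
    by (auto simp: vec_eq_iff less_Suc_eq_le jacobian_def)
qed

lemma jacobian_injective_iff:
  assumes "\<psi> \<in> Vsp n N k"
  shows "(\<forall>w\<in>carrier_vec (Suc n). jacobian n N \<psi> p *\<^sub>v w = 0\<^sub>v (Suc N) \<longrightarrow> w = 0\<^sub>v (Suc n)) \<longleftrightarrow>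
    (\<forall>v. cpt n v \<longrightarrow> (\<forall>i\<le>N. dpsi \<psi> p v i = 0) \<longrightarrow> v = (\<lambda>_. 0))"
proof -
  have vec_eq_0: "vec (Suc n) v = 0\<^sub>v (Suc n) \<longleftrightarrow> v = (\<lambda>_. 0)" if "cpt n v" for v
    using that unfolding vec_eq_iff fun_eq_iff cpt_def by (auto simp: less_Suc_eq_le) (metis not_le)
  show ?thesis
  proof (intro iffI allI impI ballI)
    fix v assume inj: "\<forall>w\<in>carrier_vec (Suc n). jacobian n N \<psi> p *\<^sub>v w = 0\<^sub>v (Suc N) \<longrightarrow> w = 0\<^sub>v (Suc n)"
      and v: "cpt n v" "\<forall>i\<le>N. dpsi \<psi> p v i = 0"
    then have "vec (Suc n) v = 0\<^sub>v (Suc n)"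
      using jacobian_mult_vec_eq_0_iff[OF assms] by simp
    then show "v = (\<lambda>_. 0)"
      using vec_eq_0 v(1) by simp
  next
    fix w :: "complex vec"
    assume inj: "\<forall>v. cpt n v \<longrightarrow> (\<forall>i\<le>N. dpsi \<psi> p v i = 0) \<longrightarrow> v = (\<lambda>_. 0)"
      and w: "w \<in> carrier_vec (Suc n)" "jacobian n N \<psi> p *\<^sub>v w = 0\<^sub>v (Suc N)"
    define v where "v j = (if j \<le> n then w $ j else 0)" for j
    have "w = vec (Suc n) v" "cpt n v"
      using w(1) by (auto simp: v_def vec_eq_iff cpt_def less_Suc_eq_le)
    then show "w = 0\<^sub>v (Suc n)"
      using inj w(2) jacobian_mult_vec_eq_0_iff[OF assms] vec_eq_0 by auto
  qed
qed

lemma immersion_at_iff_jacobian_injective: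
  assumes "k \<ge> 1" "\<psi> \<in> Vsp n N k" "cpt n p" "p \<noteq> (\<lambda>_. 0)"
  shows "immersion_at n N \<psi> p \<longleftrightarrow>
    (\<forall>w\<in>carrier_vec (Suc n). jacobian n N \<psi> p *\<^sub>v w = 0\<^sub>v (Suc N) \<longrightarrow> w = 0\<^sub>v (Suc n))"
  using immersion_at_iff_dpsi_injective[OF assms] jacobian_injective_iff[OF assms(2)] by simp

section \<open>Zariski openness of the immersion locus\<close>

lemma det_mult_jacobian_poly_in_coeffs:
  assumes R: "R \<in> carrier_mat (Suc n) (Suc N)"
  obtains G where "\<And>\<psi>. \<psi> \<in> Vsp n N k \<Longrightarrow> cpoly_eval G (Vcoords \<psi>) = det (R * jacobian n N \<psi> p)"
proof -
  let ?M = "{a. Poly_Mapping.keys a \<subseteq> {0..n} \<and> mon_degree a = k}"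
  define J where "J c = mat (Suc N) (Suc n) (\<lambda>(i, u). \<Sum>a\<in>?M. c (i, a) * mon_partial u a p)" for c
  have J: "J c \<in> carrier_mat (Suc N) (Suc n)" for c
    by (simp add: J_def)
  have "poly_fun (\<lambda>c. det (R * J c))"
  proof (rule poly_fun_det)
    show "R * J c \<in> carrier_mat (Suc n) (Suc n)" for c
      using R J by simp
    show "poly_fun (\<lambda>c. (R * J c) $$ (a, b))" if "a < Suc n" "b < Suc n" for a b
      unfolding index_mult_mat_eq_sum[OF R J that]
      using that by (intro poly_fun_sum poly_fun_mult poly_fun_const) (simp add: J_def poly_fun_sum poly_fun_mult poly_fun_const poly_fun_var)
  qed
  then obtain G where G: "(\<lambda>c. det (R * J c)) = cpoly_eval G"
    by (auto simp: poly_fun_def)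
  have "J (Vcoords \<psi>) = jacobian n N \<psi> p" if "\<psi> \<in> Vsp n N k" for \<psi>
    using Vsp_hom_poly[OF that]
    by (auto simp: J_def jacobian_def Vcoords_def cpoly_partial_eq_sum_monomials[of n k] less_Suc_eq_le intro!: eq_matI)
  then show ?thesis
    using G that by (metis (mono_tags, lifting))
qed

lemma hom_poly_fun_det_mult_jacobian:
  assumes \<psi>: "\<psi> \<in> Vsp n N k" and R: "R \<in> carrier_mat (Suc n) (Suc N)"
  shows "hom_poly_fun n (Suc n * (k - 1)) (\<lambda>z. det (R * jacobian n N \<psi> z))"
proof (rule hom_poly_fun_det)
  show "R * jacobian n N \<psi> z \<in> carrier_mat (Suc n) (Suc n)" for z
    using R by simp
  show "hom_poly_fun n (k - 1) (\<lambda>z. (R * jacobian n N \<psi> z) $$ (a, b))" if "a < Suc n" "b < Suc n" for a b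
    unfolding index_mult_mat_eq_sum[OF R jacobian_carrier that]
    using that \<psi> by (intro hom_poly_fun_sum hom_poly_fun_scale) (simp add: jacobian_def hom_poly_fun_cpoly_partial Vsp_hom_poly)
qed

lemma generic_immersion_if_det_mult_jacobian_ne_0:
  assumes k: "k \<ge> 1" and \<psi>: "\<psi> \<in> Vsp n N k" and R: "R \<in> carrier_mat (Suc n) (Suc N)"
    and p: "cpt n p" "p \<noteq> (\<lambda>_. 0)" and det: "det (R * jacobian n N \<psi> p) \<noteq> 0"
  shows "generic_immersion n N \<psi>"
proof -
  obtain g where g: "hom_poly n (Suc n * (k - 1)) g" "\<And>z. det (R * jacobian n N \<psi> z) = cpoly_eval g z"
    using hom_poly_fun_det_mult_jacobian[OF \<psi> R] unfolding hom_poly_fun_def fun_eq_iff by blast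
  have "immersion_at n N \<psi> q" if q: "cpt n q" "q \<noteq> (\<lambda>_. 0)" "cpoly_eval g q \<noteq> 0" for q
  proof -
    have "det (R * jacobian n N \<psi> q) \<noteq> 0"
      using g(2) q(3) by simp
    then show ?thesis
      unfolding immersion_at_iff_jacobian_injective[OF k \<psi> q(1,2)]
      using det_mult_ne_0_imp_kernel_trivial[OF R jacobian_carrier] by blast
  qed
  then show ?thesis
    using g p det unfolding generic_immersion_def by metis
qed

definition jacobian_det_polys :: "nat \<Rightarrow> nat \<Rightarrow> nat \<Rightarrow> (nat \<times> (nat \<Rightarrow>\<^sub>0 nat)) cpoly set" where
  "jacobian_det_polys n N k = {G. \<exists>p R. cpt n p \<and> p \<noteq> (\<lambda>_. 0) \<and> R \<in> carrier_mat (Suc n) (Suc N) \<and>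
      (\<forall>\<psi>\<in>Vsp n N k. cpoly_eval G (Vcoords \<psi>) = det (R * jacobian n N \<psi> p))}"

lemma generic_immersion_iff_jacobian_det_poly_ne_0:
  assumes k: "k \<ge> 1" and \<psi>: "\<psi> \<in> Vsp n N k"
  shows "generic_immersion n N \<psi> \<longleftrightarrow> (\<exists>G\<in>jacobian_det_polys n N k. cpoly_eval G (Vcoords \<psi>) \<noteq> 0)"
proof
  assume "generic_immersion n N \<psi>"
  then obtain p where p: "cpt n p" "p \<noteq> (\<lambda>_. 0)" "immersion_at n N \<psi> p"
    unfolding generic_immersion_def by blast
  \<comment> \<open>The Gram matrix \<open>J\<^sup>H J\<close> of the injective Jacobian \<open>J\<close> at \<open>p\<close> is invertible.\<close>
  define R where "R = transpose_mat (map_mat cnj (jacobian n N \<psi> p))"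
  have R: "R \<in> carrier_mat (Suc n) (Suc N)"
    by (simp add: R_def)
  obtain G where G: "\<And>\<phi>. \<phi> \<in> Vsp n N k \<Longrightarrow> cpoly_eval G (Vcoords \<phi>) = det (R * jacobian n N \<phi> p)"
    using det_mult_jacobian_poly_in_coeffs[OF R] by metis
  have "det (R * jacobian n N \<psi> p) \<noteq> 0"
    unfolding R_def using p immersion_at_iff_jacobian_injective[OF k \<psi> p(1,2)]
    by (intro det_gram_ne_0[OF jacobian_carrier]) auto
  moreover have "G \<in> jacobian_det_polys n N k"
    unfolding jacobian_det_polys_def using G p(1,2) R by blast
  ultimately show "\<exists>G\<in>jacobian_det_polys n N k. cpoly_eval G (Vcoords \<psi>) \<noteq> 0"
    using G[OF \<psi>] by (intro bexI) auto
next
  assume "\<exists>G\<in>jacobian_det_polys n N k. cpoly_eval G (Vcoords \<psi>) \<noteq> 0"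
  then obtain p R where "cpt n p" "p \<noteq> (\<lambda>_. 0)" "R \<in> carrier_mat (Suc n) (Suc N)"
    "det (R * jacobian n N \<psi> p) \<noteq> 0"
    using \<psi> unfolding jacobian_det_polys_def by auto
  then show "generic_immersion n N \<psi>"
    using generic_immersion_if_det_mult_jacobian_ne_0[OF k \<psi>] by blast
qed

theorem lemma9:
  fixes n N k :: nat
  assumes "n \<ge> 1" and "N \<ge> 1" and "k \<ge> 1"
  shows "zariski_open_in_V (V1 n N k) (V2 n N k)"
proof -
  have "V2 n N k = {\<psi> \<in> V1 n N k. \<exists>G\<in>jacobian_det_polys n N k. cpoly_eval G (Vcoords \<psi>) \<noteq> 0}"
    using generic_immersion_iff_jacobian_det_poly_ne_0[OF assms(3)] by (auto simp: V2_def V1_def)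
  then show ?thesis
    unfolding zariski_open_in_V_def by (auto simp: V2_def)
qed

end
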